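(* There exists a constant $c>0$ such that for all even $n>2$ and all odd $d>1$, the set $\mathrm{Zer}_1(d,n)=\{A\in\Omega_1(d,n):\operatorname{Per}(A)=0\}$ has dimension at least $cn^{3/2}$; that is, there is a set $V$ of vertices of $\Omega_1(d,n)$ whose convex hull is contained in $\mathrm{Zer}_1(d,n)$ and has affine dimension at least $cn^{3/2}$.
   Context: Let $I_n=\{1,\dots,n\}$. A $d$-dimensional matrix of order $n$ is a function $I_n^d\to\mathbb R$. A line is the set of positions obtained by varying one coordinate and fixing the others. A diagonal is a selection of $n$ positions any two of which differ in every coordinate; $\operatorname{Per}(A)$ is the sum over diagonals of the product of the entries on the diagonal. $\Omega_1(d,n)$ is the convex polytope of non-negative $d$-dimensional matrices of order $n$ whose entries in each line sum to $1$. The dimension of $\mathrm{Zer}_1(d,n)$ is the maximum dimension of a polytope $\mathrm{Hull}(V)$, $V$ a set of vertices of $\Omega_1(d,n)$, with $\mathrm{Hull}(V)\subseteq\mathrm{Zer}_1(d,n)$. *)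

theory Defs
  imports "HOL-Analysis.Analysis"
begin

text \<open>Index tuples are lists of length d with entries in {0..<n} (0-based version of I_n).
  Matrices are represented as functions on all of nat list, required to vanish
  outside the index set, so they form exactly the space of real functions on I_n^d.\<close>

type_synonym mat = "nat list \<Rightarrow> real"

definition positions :: "nat \<Rightarrow> nat \<Rightarrow> nat list set" where
  "positions d n = {p. length p = d \<and> set p \<subseteq> {..<n}}"

definition diagonals :: "nat \<Rightarrow> nat \<Rightarrow> nat list set set" where
  "diagonals d n = {D. D \<subseteq> positions d n \<and> card D = n \<and>
      (\<forall>p\<in>D. \<forall>q\<in>D. p \<noteq> q \<longrightarrow> (\<forall>k<d. p ! k \<noteq> q ! k))}"

definition per :: "nat \<Rightarrow> nat \<Rightarrow> mat \<Rightarrow> real" where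
  "per d n A = (\<Sum>D\<in>diagonals d n. \<Prod>p\<in>D. A p)"

definition Omega1 :: "nat \<Rightarrow> nat \<Rightarrow> mat set" where
  "Omega1 d n = {A. (\<forall>p. p \<notin> positions d n \<longrightarrow> A p = 0)
      \<and> (\<forall>p\<in>positions d n. 0 \<le> A p)
      \<and> (\<forall>p\<in>positions d n. \<forall>k<d. (\<Sum>j<n. A (p[k := j])) = 1)}"

definition Zer1 :: "nat \<Rightarrow> nat \<Rightarrow> mat set" where
  "Zer1 d n = {A \<in> Omega1 d n. per d n A = 0}"

definition vertices :: "nat \<Rightarrow> nat \<Rightarrow> mat set" where
  "vertices d n = {A \<in> Omega1 d n. \<forall>B\<in>Omega1 d n. \<forall>C\<in>Omega1 d n. \<forall>t::real.
      0 < t \<and> t < 1 \<and> A = (\<lambda>p. t * B p + (1 - t) * C p) \<longrightarrow> B = C}"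

definition mat_hull :: "mat set \<Rightarrow> mat set" where
  "mat_hull V = {A. \<exists>S w. finite S \<and> S \<subseteq> V \<and> (\<forall>x\<in>S. 0 \<le> w x) \<and> sum w S = 1
      \<and> A = (\<lambda>p. \<Sum>x\<in>S. w x * x p)}"

definition aff_indep :: "mat set \<Rightarrow> bool" where
  "aff_indep S \<longleftrightarrow> (\<forall>u. sum u S = 0 \<and> (\<lambda>p. \<Sum>x\<in>S. u x * x p) = (\<lambda>_. 0)
      \<longrightarrow> (\<forall>x\<in>S. u x = 0))"

definition aff_dim_ge :: "mat set \<Rightarrow> real \<Rightarrow> bool" where
  "aff_dim_ge X m \<longleftrightarrow> (\<exists>S. S \<subseteq> X \<and> finite S \<and> aff_indep S \<and> real (card S) \<ge> m + 1)"

end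

theory Submission
  imports Defs
begin

text \<open>A Latin square \<sigma> of order n, with symbols read modulo n, yields the 0/1 matrix in
  Omega_1(d, n) supported on the positions p with p_3 + ... + p_d = \<sigma>(p_1, p_2) (mod n), and
  this matrix is a vertex. On that support the coordinate sum of p is congruent to the excess
  \<sigma>(p_1, p_2) + p_1 + p_2. Along a diagonal the coordinate sums add up to d n (n - 1) / 2,
  which is n / 2 modulo n when d is odd and n is even. So if every square of a family keeps its
  excess in row i between lo i and hi i, where the sums of lo and of hi lie strictly between
  -n/2 and n/2, no diagonal lies inside the union of the supports: every diagonal meets a
  common zero of the family, and the permanent vanishes on the convex hull.

  A suitable family starts from a perturbation of the cyclic square -(i + j) that contains
  about n/18 * n/2 disjoint intercalates; switching any single one of them keeps the excess
  bounded and produces a square that owns a cell where it differs from all the others. The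
  resulting vertices are affinely independent, so the dimension is even of order n^2.\<close>

lemma sum_indicator_eq_1:
  fixes n :: nat
  assumes "\<exists>!j. j < n \<and> P j"
  shows "(\<Sum>j<n. if P j then 1 else 0 :: real) = 1"
proof -
  obtain j0 where j0: "j0 < n" "P j0" using assms by blast
  have "P j \<longleftrightarrow> j = j0" if "j < n" for j
    using assms j0 that by blast
  then have "(\<Sum>j<n. if P j then 1 else 0 :: real) = (\<Sum>j<n. if j = j0 then 1 else 0)"
    by (intro sum.cong) auto
  also have "\<dots> = 1" using j0 by simp
  finally show ?thesis .
qed

lemma ex1_residue_if_inj_on_mod:
  assumes "0 < n" and inj: "inj_on (\<lambda>i. f i mod int n) {..<n}"
  shows "\<exists>!i. i < n \<and> f i mod int n = r mod int n"
proof -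
  let ?g = "\<lambda>i. f i mod int n"
  have "?g ` {..<n} \<subseteq> {0..<int n}" using \<open>0 < n\<close> by auto
  moreover have "card (?g ` {..<n}) = card {0..<int n}"
    using card_image[OF inj] by simp
  ultimately have onto: "?g ` {..<n} = {0..<int n}"
    by (intro card_subset_eq) simp_all
  have "r mod int n \<in> {0..<int n}" using \<open>0 < n\<close> by simp
  then have "r mod int n \<in> ?g ` {..<n}" by (simp only: onto)
  then obtain i where "i < n" "?g i = r mod int n" by auto
  moreover have "i' = i" if "i' < n" "?g i' = r mod int n" for i'
    using inj_onD[OF inj, of i' i] that calculation by simp
  ultimately show ?thesis by blast
qed

lemma inj_on_mod_comp:
  assumes "inj_on (\<lambda>x. f x mod int n) {..<n}" "\<rho> ` {..<n} \<subseteq> {..<n}" "inj_on \<rho> {..<n}"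
  shows "inj_on (\<lambda>x. f (\<rho> x) mod int n) {..<n}"
  using comp_inj_on[OF assms(3) inj_on_subset[OF assms(1,2)]] by (simp add: comp_def)

lemma inj_on_add_mod: "inj_on (\<lambda>j. (c + int j) mod int n) {..<n}"
proof (rule inj_onI)
  fix x y assume "x \<in> {..<n}" "y \<in> {..<n}" and eq: "(c + int x) mod int n = (c + int y) mod int n"
  have "(c + int x - c) mod int n = (c + int y - c) mod int n"
    using eq by (rule mod_diff_cong) simp
  with \<open>x \<in> {..<n}\<close> \<open>y \<in> {..<n}\<close> show "x = y" by simp
qed

lemma inj_on_diff_mod: "inj_on (\<lambda>i. (c - int i) mod int n) {..<n}"
proof (rule inj_onI)
  fix x y assume "x \<in> {..<n}" "y \<in> {..<n}" and eq: "(c - int x) mod int n = (c - int y) mod int n"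
  have "(c - (c - int x)) mod int n = (c - (c - int y)) mod int n"
    using eq by (rule mod_diff_cong[OF refl])
  with \<open>x \<in> {..<n}\<close> \<open>y \<in> {..<n}\<close> show "x = y" by simp
qed

lemma mod_succ_neq: "1 < n \<Longrightarrow> (a + 1) mod n \<noteq> a mod (n :: int)"
  by (auto simp: mod_eq_dvd_iff dest: zdvd_imp_le)

lemma sum_if_less: "m \<le> n \<Longrightarrow> (\<Sum>i<n. if i < m then c else 0) = of_nat m * (c :: 'a :: semiring_1)"
proof -
  assume "m \<le> n"
  have "(\<Sum>i<n. if i < m then c else 0) = (\<Sum>i\<in>{..<n} \<inter> {i. i < m}. c)"
    by (subst sum.inter_restrict) simp_all
  also have "{..<n} \<inter> {i. i < m} = {..<m}" using \<open>m \<le> n\<close> by auto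
  finally show ?thesis by simp
qed

lemma int_sum_list_update:
  "i < length xs \<Longrightarrow> int (sum_list (xs[i := j])) = int (sum_list xs) - int (xs ! i) + int j"
  by (induction xs arbitrary: i) (auto split: nat.split)

section \<open>Latin squares modulo n\<close>

definition latin_square :: "nat \<Rightarrow> (nat \<Rightarrow> nat \<Rightarrow> int) \<Rightarrow> bool" where
  "latin_square n \<sigma> \<longleftrightarrow>
     (\<forall>j<n. inj_on (\<lambda>i. \<sigma> i j mod int n) {..<n}) \<and> (\<forall>i<n. inj_on (\<lambda>j. \<sigma> i j mod int n) {..<n})"

lemma latin_square_permute_rows:
  assumes L: "latin_square n \<sigma>" and \<rho>: "\<rho> ` {..<n} \<subseteq> {..<n}" "inj_on \<rho> {..<n}"
  shows "latin_square n (\<lambda>i j. \<sigma> (\<rho> i) j)"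
  using L \<rho> by (auto simp: latin_square_def intro: inj_on_mod_comp)

lemma latin_square_switch_intercalate:
  fixes a a' b b' :: nat
  assumes L: "latin_square n \<sigma>" and "a < n" "a' < n" "b < n" "b' < n"
    and ab: "\<sigma> a b mod int n = \<sigma> a' b' mod int n" and ab': "\<sigma> a b' mod int n = \<sigma> a' b mod int n"
  shows "latin_square n
    (\<lambda>i j. if i = a \<or> i = a' then \<sigma> i (Transposition.transpose b b' j) else \<sigma> i j)"
    (is "latin_square n ?\<tau>")
  unfolding latin_square_def
proof (intro conjI allI impI)
  fix i assume "i < n"
  then have row: "inj_on (\<lambda>j. \<sigma> i j mod int n) {..<n}"
    using L by (simp add: latin_square_def)
  have "inj_on (\<lambda>j. \<sigma> i (Transposition.transpose b b' j) mod int n) {..<n}"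
    using \<open>b < n\<close> \<open>b' < n\<close> by (intro inj_on_mod_comp[OF row]) simp_all
  with row show "inj_on (\<lambda>j. ?\<tau> i j mod int n) {..<n}"
    by (cases "i = a \<or> i = a'") simp_all
next
  fix j assume "j < n"
  define \<rho> where "\<rho> = (if j = b \<or> j = b' then Transposition.transpose a a' else id)"
  have "?\<tau> i j mod int n = \<sigma> (\<rho> i) j mod int n" for i
    \<comment> \<open>by the intercalate condition, switching columns b and b' in rows a and a' has the same
      effect on columns b and b' as exchanging rows a and a'\<close>
    using ab ab' by (auto simp: \<rho>_def)
  moreover have "latin_square n (\<lambda>i j. \<sigma> (\<rho> i) j)"
    using \<open>a < n\<close> \<open>a' < n\<close>
    by (intro latin_square_permute_rows[OF L]) (auto simp: \<rho>_def)
  ultimately show "inj_on (\<lambda>i. ?\<tau> i j mod int n) {..<n}"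
    using \<open>j < n\<close> by (simp add: latin_square_def)
qed

section \<open>The polytope Omega_1(d, n)\<close>

lemma finite_positions: "finite (positions d n)"
  using finite_lists_length_eq[of "{..<n}" d] by (simp add: positions_def conj_commute)

lemma nth_positions_less: "p \<in> positions d n \<Longrightarrow> k < d \<Longrightarrow> p ! k < n"
  unfolding positions_def by (auto dest: nth_mem)

lemma positions_update: "p \<in> positions d n \<Longrightarrow> j < n \<Longrightarrow> p[k := j] \<in> positions d n"
  unfolding positions_def by (auto dest: subsetD[OF set_update_subset_insert])

lemma Omega1_nonneg: "A \<in> Omega1 d n \<Longrightarrow> 0 \<le> A p"
  by (cases "p \<in> positions d n") (auto simp: Omega1_def)

lemma Omega1_le_1:
  assumes A: "A \<in> Omega1 d n" and "0 < d"
  shows "A p \<le> 1"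
proof (cases "p \<in> positions d n")
  case True
  have "A (p[0 := p ! 0]) \<le> (\<Sum>j<n. A (p[0 := j]))"
    using nth_positions_less[OF True \<open>0 < d\<close>] A
    by (intro member_le_sum) (auto intro: Omega1_nonneg)
  also have "\<dots> = 1" using A True \<open>0 < d\<close> by (simp add: Omega1_def)
  finally show ?thesis by simp
next
  case False
  then show ?thesis using A by (simp add: Omega1_def)
qed

lemma Omega1_zero_one_in_vertices:
  assumes A: "A \<in> Omega1 d n" and "0 < d" and zero_one: "\<And>p. A p = 0 \<or> A p = 1"
  shows "A \<in> vertices d n"
  unfolding vertices_def
proof (intro CollectI conjI A ballI allI impI ext)
  fix B C p and t :: real
  assume B: "B \<in> Omega1 d n" and C: "C \<in> Omega1 d n"
    and t: "0 < t \<and> t < 1 \<and> A = (\<lambda>p. t * B p + (1 - t) * C p)"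
  have B01: "0 \<le> B p" "B p \<le> 1" and C01: "0 \<le> C p" "C p \<le> 1"
    using B C \<open>0 < d\<close> by (auto intro: Omega1_nonneg Omega1_le_1)
  have Ap: "A p = t * B p + (1 - t) * C p" using t by simp
  have tB: "0 \<le> t * B p" "t * B p \<le> t" and tC: "0 \<le> (1 - t) * C p" "(1 - t) * C p \<le> 1 - t"
    using B01 C01 t by (simp_all add: mult_left_le)
  from zero_one[of p] show "B p = C p"
  proof
    assume "A p = 0"
    then have "t * B p = 0" "(1 - t) * C p = 0" using Ap tB tC by linarith+
    then show ?thesis using t by simp
  next
    assume "A p = 1"
    then have "t * B p = t" "(1 - t) * C p = 1 - t" using Ap tB tC by linarith+
    then show ?thesis using t by simp
  qed
qed

lemma subset_mat_hull: "V \<subseteq> mat_hull V"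
proof
  fix A assume "A \<in> V"
  then show "A \<in> mat_hull V"
    unfolding mat_hull_def by (intro CollectI exI[of _ "{A}"] exI[of _ "\<lambda>_. 1"]) auto
qed

lemma aff_dim_ge_mono:
  assumes "aff_dim_ge X m" "m' \<le> m"
  shows "aff_dim_ge X m'"
proof -
  obtain S where "S \<subseteq> X" "finite S" "aff_indep S" "real (card S) \<ge> m + 1"
    using assms(1) unfolding aff_dim_ge_def by blast
  with assms(2) show ?thesis unfolding aff_dim_ge_def by (intro exI[of _ S]) auto
qed

lemma mat_hull_subset_Omega1:
  assumes V: "V \<subseteq> Omega1 d n"
  shows "mat_hull V \<subseteq> Omega1 d n"
proof
  fix A assume "A \<in> mat_hull V"
  then obtain S w where S: "finite S" "S \<subseteq> V" and w: "\<forall>x\<in>S. 0 \<le> w x" "sum w S = 1"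
    and A: "A = (\<lambda>p. \<Sum>x\<in>S. w x * x p)"
    unfolding mat_hull_def by blast
  have S_Omega1: "x \<in> Omega1 d n" if "x \<in> S" for x
    using that S V by blast
  show "A \<in> Omega1 d n"
    unfolding Omega1_def
  proof (intro CollectI conjI ballI allI impI)
    fix p assume "p \<notin> positions d n"
    then show "A p = 0" unfolding A using S_Omega1 by (auto simp: Omega1_def intro!: sum.neutral)
  next
    fix p
    have "0 \<le> w x * x p" if "x \<in> S" for x
      using w(1) Omega1_nonneg[OF S_Omega1[OF that]] that by simp
    then show "0 \<le> A p" unfolding A by (simp add: sum_nonneg)
  next
    fix p k assume "p \<in> positions d n" "k < d"
    have "(\<Sum>j<n. A (p[k := j])) = (\<Sum>x\<in>S. w x * (\<Sum>j<n. x (p[k := j])))"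
      unfolding A by (simp add: sum_distrib_left sum.swap[of _ "{..<n}"])
    also have "\<dots> = sum w S"
      using S_Omega1 \<open>p \<in> positions d n\<close> \<open>k < d\<close> by (intro sum.cong) (auto simp: Omega1_def)
    finally show "(\<Sum>j<n. A (p[k := j])) = 1" using w(2) by simp
  qed
qed

lemma mat_hull_subset_Zer1:
  assumes V: "V \<subseteq> Omega1 d n"
    and common_zero: "\<And>D. D \<in> diagonals d n \<Longrightarrow> \<exists>p\<in>D. \<forall>A\<in>V. A p = 0"
  shows "mat_hull V \<subseteq> Zer1 d n"
proof
  fix A assume A_hull: "A \<in> mat_hull V"
  then obtain S w where "S \<subseteq> V" and A: "A = (\<lambda>p. \<Sum>x\<in>S. w x * x p)"
    unfolding mat_hull_def by blast
  have "(\<Prod>p\<in>D. A p) = 0" if D: "D \<in> diagonals d n" for D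
  proof -
    obtain p where "p \<in> D" "\<forall>x\<in>V. x p = 0" using common_zero[OF D] by blast
    then have "A p = 0" unfolding A using \<open>S \<subseteq> V\<close> by (auto intro!: sum.neutral)
    moreover have "finite D"
      using D finite_positions by (auto simp: diagonals_def intro: finite_subset)
    ultimately show ?thesis using \<open>p \<in> D\<close> by (meson prod_zero)
  qed
  then have "per d n A = 0" unfolding per_def by simp
  then show "A \<in> Zer1 d n"
    using mat_hull_subset_Omega1[OF V] A_hull by (auto simp: Zer1_def)
qed

lemma private_positions_aff_indep:
  assumes "finite I" "i0 \<in> I"
    and own: "\<And>i. i \<in> I \<Longrightarrow> i \<noteq> i0 \<Longrightarrow> \<exists>p. G i p \<noteq> 0 \<and> (\<forall>i'\<in>I. i' \<noteq> i \<longrightarrow> G i' p = 0)"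
  shows "inj_on G I" and "aff_indep (G ` I)"
proof -
  show inj: "inj_on G I"
  proof (rule inj_onI, rule ccontr)
    fix i i' assume i: "i \<in> I" "i' \<in> I" "G i = G i'" "i \<noteq> i'"
    show False
    proof (cases "i = i0")
      case True
      then obtain p where "G i' p \<noteq> 0" "G i p = 0" using own[of i'] i by auto
      then show False using i by simp
    next
      case False
      then obtain p where "G i p \<noteq> 0" "G i' p = 0" using own[of i] i by auto
      then show False using i by simp
    qed
  qed
  show "aff_indep (G ` I)"
    unfolding aff_indep_def
  proof (intro allI impI)
    fix u :: "mat \<Rightarrow> real"
    assume u: "sum u (G ` I) = 0 \<and> (\<lambda>p. \<Sum>x\<in>G ` I. u x * x p) = (\<lambda>_. 0)"
    have comb: "(\<Sum>j\<in>I. u (G j) * G j p) = 0" for p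
    proof -
      have "(\<Sum>x\<in>G ` I. u x * x p) = 0" using u by (simp add: fun_eq_iff)
      then show ?thesis by (simp add: sum.reindex[OF inj])
    qed
    have u0: "u (G i) = 0" if i: "i \<in> I" "i \<noteq> i0" for i
    proof -
      obtain p where p: "G i p \<noteq> 0" "\<forall>j\<in>I. j \<noteq> i \<longrightarrow> G j p = 0"
        using own i by blast
      have "(\<Sum>j\<in>I. u (G j) * G j p) = u (G i) * G i p"
        using p i \<open>finite I\<close> by (subst sum.remove[of _ i]) (auto intro!: sum.neutral)
      then show ?thesis using comb[of p] p(1) by simp
    qed
    have "sum u (G ` I) = (\<Sum>j\<in>I. u (G j))" by (simp add: sum.reindex[OF inj])
    also have "\<dots> = u (G i0)"
      using u0 \<open>i0 \<in> I\<close> \<open>finite I\<close> by (subst sum.remove[of _ i0]) (auto intro!: sum.neutral)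
    finally have "u (G i0) = 0" using u by simp
    with u0 show "\<forall>x\<in>G ` I. u x = 0" by auto
  qed
qed

section \<open>Coordinate sums along diagonals\<close>

lemma diagonal_nth_bij:
  assumes D: "D \<in> diagonals d n" and "k < d"
  shows "bij_betw (\<lambda>p. p ! k) D {..<n}"
proof -
  have "D \<subseteq> positions d n" "card D = n"
    and distinct: "\<And>p q. p \<in> D \<Longrightarrow> q \<in> D \<Longrightarrow> p \<noteq> q \<Longrightarrow> p ! k \<noteq> q ! k"
    using D \<open>k < d\<close> by (auto simp: diagonals_def)
  have inj: "inj_on (\<lambda>p. p ! k) D" using distinct by (meson inj_onI)
  have "(\<lambda>p. p ! k) ` D \<subseteq> {..<n}"
    using \<open>D \<subseteq> positions d n\<close> nth_positions_less \<open>k < d\<close> by auto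
  moreover have "card ((\<lambda>p. p ! k) ` D) = card {..<n}"
    using card_image[OF inj] \<open>card D = n\<close> by simp
  ultimately have "(\<lambda>p. p ! k) ` D = {..<n}" by (intro card_subset_eq) simp_all
  with inj show ?thesis by (simp add: bij_betw_def)
qed

lemma sum_sum_list_diagonal:
  assumes D: "D \<in> diagonals d n"
  shows "(\<Sum>p\<in>D. sum_list p) = d * (\<Sum>i<n. i)"
proof -
  have "(\<Sum>p\<in>D. sum_list p) = (\<Sum>p\<in>D. \<Sum>k<d. p ! k)"
    using D by (intro sum.cong) (auto simp: diagonals_def positions_def sum_list_sum_nth atLeast0LessThan)
  also have "\<dots> = (\<Sum>k<d. \<Sum>p\<in>D. p ! k)" by (rule sum.swap)
  also have "\<dots> = (\<Sum>k<d. \<Sum>i<n. i)"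
    using sum.reindex_bij_betw[OF diagonal_nth_bij[OF D], where g = "\<lambda>i. i"] by simp
  finally show ?thesis by simp
qed

lemma half_residue_not_small:
  fixes s :: int
  assumes "even n" "odd d" and s: "s mod int n = int (d * (\<Sum>i<n. i)) mod int n"
  shows "\<not> \<bar>2 * s\<bar> < int n"
proof
  assume small: "\<bar>2 * s\<bar> < int n"
  obtain m where m: "n = 2 * m" using \<open>even n\<close> by blast
  have "1 \<le> 2 * m" using small m by simp
  moreover have "(\<Sum>i<n. i) = m * (2 * m - 1)"
    using Sum_Ico_nat[of 0 n] m by (simp add: atLeast0LessThan)
  ultimately have total: "int (d * (\<Sum>i<n. i)) = int d * int m * (2 * int m - 1)"
    by (simp add: of_nat_diff)
  have "int n dvd s - int d * int m * (2 * int m - 1)"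
    using s unfolding total by (simp only: mod_eq_dvd_iff)
  then have "2 * int n dvd 2 * (s - int d * int m * (2 * int m - 1))"
    by (rule mult_dvd_mono[OF dvd_refl])
  moreover have "2 * (s - int d * int m * (2 * int m - 1)) = 2 * s - int d * (2 * int m - 1) * int n"
    using m by (simp add: algebra_simps)
  ultimately have "2 * int n dvd 2 * s - int d * (2 * int m - 1) * int n" by metis
  moreover have "odd (int d * (2 * int m - 1))" using \<open>odd d\<close> by simp
  then obtain r where r: "int d * (2 * int m - 1) = 2 * r + 1" by (rule oddE)
  ultimately have "2 * int n dvd (2 * s - int n) - 2 * int n * r"
    unfolding r by (simp add: algebra_simps)
  from dvd_add[OF this dvd_triv_left[of "2 * int n" r]]
  obtain q where q: "2 * s - int n = 2 * int n * q" by (auto elim: dvdE)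
  show False
  proof (cases "0 \<le> q")
    case True
    then have "0 \<le> 2 * int n * q" by simp
    then show False using q small by linarith
  next
    case False
    then have "2 * int n * q \<le> 2 * int n * (- 1)" using small by (intro mult_left_mono) auto
    then show False using q small by linarith
  qed
qed

lemma diagonal_leaves_band:
  fixes lo hi :: "nat \<Rightarrow> int"
  assumes D: "D \<in> diagonals d n" and "odd d" "even n"
    and hi: "2 * (\<Sum>i<n. hi i) < int n" and lo: "- int n < 2 * (\<Sum>i<n. lo i)"
  shows "\<exists>p\<in>D. \<not> (\<exists>e. lo (p ! 0) \<le> e \<and> e \<le> hi (p ! 0) \<and> int (sum_list p) mod int n = e mod int n)"
proof (rule ccontr)
  assume "\<not> ?thesis"
  then obtain e where e: "\<And>p. p \<in> D \<Longrightarrow> lo (p ! 0) \<le> e p \<and> e p \<le> hi (p ! 0)"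
    and e_mod: "\<And>p. p \<in> D \<Longrightarrow> int (sum_list p) mod int n = e p mod int n"
    by metis
  have "0 < d" using \<open>odd d\<close> by (cases d) auto
  have first_bij: "bij_betw (\<lambda>p. p ! 0) D {..<n}" by (rule diagonal_nth_bij[OF D \<open>0 < d\<close>])
  define s where "s = (\<Sum>p\<in>D. e p)"
  have "s \<le> (\<Sum>p\<in>D. hi (p ! 0))" unfolding s_def using e by (intro sum_mono) auto
  also have "\<dots> = (\<Sum>i<n. hi i)" using sum.reindex_bij_betw[OF first_bij] by simp
  finally have "2 * s < int n" using hi by linarith
  have "(\<Sum>i<n. lo i) = (\<Sum>p\<in>D. lo (p ! 0))" using sum.reindex_bij_betw[OF first_bij] by metis
  also have "\<dots> \<le> s" unfolding s_def using e by (intro sum_mono) auto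
  finally have "- int n < 2 * s" using lo by linarith
  have "s mod int n = (\<Sum>p\<in>D. e p mod int n) mod int n" unfolding s_def by (rule mod_sum_eq[symmetric])
  also have "\<dots> = (\<Sum>p\<in>D. int (sum_list p) mod int n) mod int n" using e_mod by simp
  also have "\<dots> = int (\<Sum>p\<in>D. sum_list p) mod int n" by (simp add: mod_sum_eq)
  also have "\<dots> = int (d * (\<Sum>i<n. i)) mod int n" by (simp only: sum_sum_list_diagonal[OF D])
  finally show False
    using half_residue_not_small[OF \<open>even n\<close> \<open>odd d\<close>] \<open>2 * s < int n\<close> \<open>- int n < 2 * s\<close> by force
qed

section \<open>Matrices of Latin squares\<close>

definition latin_matrix :: "nat \<Rightarrow> nat \<Rightarrow> (nat \<Rightarrow> nat \<Rightarrow> int) \<Rightarrow> mat" where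
  "latin_matrix d n \<sigma> p =
     (if p \<in> positions d n \<and> int (sum_list (drop 2 p)) mod int n = \<sigma> (p!0) (p!1) mod int n
      then 1 else 0)"

lemma latin_matrix_line_sum:
  assumes L: "latin_square n \<sigma>" and "2 \<le> d" and p: "p \<in> positions d n" and "k < d"
  shows "(\<Sum>j<n. latin_matrix d n \<sigma> (p[k := j])) = 1"
proof -
  have "length p = d" using p by (simp add: positions_def)
  have "0 < n" using nth_positions_less[OF p, of 0] \<open>2 \<le> d\<close> by simp
  let ?s = "int (sum_list (drop 2 p))"
  let ?P = "\<lambda>j. int (sum_list (drop 2 (p[k := j]))) mod int n = \<sigma> (p[k := j] ! 0) (p[k := j] ! 1) mod int n"
  have "(\<Sum>j<n. latin_matrix d n \<sigma> (p[k := j])) = (\<Sum>j<n. if ?P j then 1 else 0)"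
    by (intro sum.cong) (auto simp: latin_matrix_def positions_update[OF p])
  also have "\<dots> = 1"
  proof (intro sum_indicator_eq_1)
    consider "k = 0" | "k = 1" | "2 \<le> k" by linarith
    then show "\<exists>!j. j < n \<and> ?P j"
    proof cases
      case 1
      then have "?P j \<longleftrightarrow> \<sigma> j (p!1) mod int n = ?s mod int n" for j
        using \<open>length p = d\<close> \<open>2 \<le> d\<close> by auto
      with L \<open>0 < n\<close> nth_positions_less[OF p, of 1] \<open>2 \<le> d\<close> show ?thesis
        by (simp add: latin_square_def ex1_residue_if_inj_on_mod)
    next
      case 2
      then have "?P j \<longleftrightarrow> \<sigma> (p!0) j mod int n = ?s mod int n" for j
        using \<open>length p = d\<close> \<open>2 \<le> d\<close> by auto
      with L \<open>0 < n\<close> nth_positions_less[OF p, of 0] \<open>2 \<le> d\<close> show ?thesis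
        by (simp add: latin_square_def ex1_residue_if_inj_on_mod)
    next
      case 3
      let ?c = "?s - int (p ! k)"
      have "int (sum_list (drop 2 (p[k := j]))) = ?c + int j" for j
        using 3 \<open>k < d\<close> \<open>length p = d\<close>
        by (simp add: drop_update_swap int_sum_list_update Suc_diff_Suc numeral_2_eq_2)
      moreover have "p[k := j] ! 0 = p ! 0" "p[k := j] ! 1 = p ! 1" for j
        using 3 by auto
      ultimately have "?P j \<longleftrightarrow> (?c + int j) mod int n = \<sigma> (p!0) (p!1) mod int n" for j
        by simp
      then show ?thesis
        using ex1_residue_if_inj_on_mod[OF \<open>0 < n\<close> inj_on_add_mod] by simp
    qed
  qed
  finally show ?thesis .
qed

lemma latin_matrix_in_Omega1:
  assumes "latin_square n \<sigma>" "2 \<le> d"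
  shows "latin_matrix d n \<sigma> \<in> Omega1 d n"
  unfolding Omega1_def
proof (intro CollectI conjI allI ballI impI)
  show "latin_matrix d n \<sigma> p = 0" if "p \<notin> positions d n" for p
    using that by (simp add: latin_matrix_def)
  show "0 \<le> latin_matrix d n \<sigma> p" for p
    by (simp add: latin_matrix_def)
qed (use latin_matrix_line_sum[OF assms] in blast)

lemma latin_matrix_in_vertices:
  assumes "latin_square n \<sigma>" "2 \<le> d"
  shows "latin_matrix d n \<sigma> \<in> vertices d n"
  using assms by (intro Omega1_zero_one_in_vertices latin_matrix_in_Omega1) (auto simp: latin_matrix_def)

lemma mat_hull_latin_matrices_subset_Zer1:
  fixes lo hi :: "nat \<Rightarrow> int"
  assumes "odd d" "3 \<le> d" "even n"
    and hi: "2 * (\<Sum>i<n. hi i) < int n" and lo: "- int n < 2 * (\<Sum>i<n. lo i)"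
    and latin: "\<And>\<sigma>. \<sigma> \<in> S \<Longrightarrow> latin_square n \<sigma>"
    and band: "\<And>\<sigma> i j. \<sigma> \<in> S \<Longrightarrow> i < n \<Longrightarrow> j < n \<Longrightarrow>
                lo i \<le> \<sigma> i j + int i + int j \<and> \<sigma> i j + int i + int j \<le> hi i"
  shows "mat_hull (latin_matrix d n ` S) \<subseteq> Zer1 d n"
proof (rule mat_hull_subset_Zer1)
  show "latin_matrix d n ` S \<subseteq> Omega1 d n"
    using latin \<open>3 \<le> d\<close> by (auto intro: latin_matrix_in_Omega1)
next
  fix D assume D: "D \<in> diagonals d n"
  then obtain p where "p \<in> D"
    and outside: "\<not> (\<exists>e. lo (p ! 0) \<le> e \<and> e \<le> hi (p ! 0) \<and> int (sum_list p) mod int n = e mod int n)"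
    using diagonal_leaves_band[OF D \<open>odd d\<close> \<open>even n\<close> hi lo] by blast
  have "latin_matrix d n \<sigma> p = 0" if "\<sigma> \<in> S" for \<sigma>
  proof (rule ccontr)
    assume "latin_matrix d n \<sigma> p \<noteq> 0"
    then have p: "p \<in> positions d n"
      and p_mod: "int (sum_list (drop 2 p)) mod int n = \<sigma> (p ! 0) (p ! 1) mod int n"
      by (auto simp: latin_matrix_def split: if_splits)
    let ?e = "\<sigma> (p ! 0) (p ! 1) + int (p ! 0) + int (p ! 1)"
    have "length p = d" using p by (simp add: positions_def)
    then have "sum_list p = p ! 0 + p ! 1 + sum_list (drop 2 p)"
      using \<open>3 \<le> d\<close> by (cases p; cases "tl p") auto
    then have "int (sum_list p) mod int n
        = (int (p ! 0) + int (p ! 1) + int (sum_list (drop 2 p)) mod int n) mod int n"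
      by (simp add: mod_add_right_eq)
    also have "\<dots> = ?e mod int n"
      unfolding p_mod mod_add_right_eq by (simp add: ac_simps)
    finally have "int (sum_list p) mod int n = ?e mod int n" .
    moreover have "lo (p ! 0) \<le> ?e \<and> ?e \<le> hi (p ! 0)"
      using p \<open>3 \<le> d\<close> by (intro band[OF that] nth_positions_less) auto
    ultimately show False using outside by blast
  qed
  then show "\<exists>p\<in>D. \<forall>A\<in>latin_matrix d n ` S. A p = 0" using \<open>p \<in> D\<close> by blast
qed

lemma latin_matrix_at_cell:
  fixes \<tau> :: int
  assumes "3 \<le> d" "i < n" "j < n"
  defines "p \<equiv> i # j # nat (\<tau> mod int n) # replicate (d - 3) 0"
  shows "p \<in> positions d n" and "latin_matrix d n \<sigma> p = (if \<sigma> i j mod int n = \<tau> mod int n then 1 else 0)"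
proof -
  have "0 < n" using \<open>i < n\<close> by simp
  then have "nat (\<tau> mod int n) < n" by (simp add: nat_less_iff)
  then show p: "p \<in> positions d n"
    using assms by (auto simp: p_def positions_def)
  have "int (sum_list (drop 2 p)) = \<tau> mod int n" using \<open>0 < n\<close> by (simp add: p_def)
  then show "latin_matrix d n \<sigma> p = (if \<sigma> i j mod int n = \<tau> mod int n then 1 else 0)"
    using p by (auto simp: latin_matrix_def p_def)
qed

lemma aff_dim_ge_latin_matrices:
  assumes "finite I" "x0 \<in> I" "3 \<le> d"
    and own_cell: "\<And>x. x \<in> I \<Longrightarrow> x \<noteq> x0 \<Longrightarrow>
      \<exists>i<n. \<exists>j<n. \<forall>y\<in>I. y \<noteq> x \<longrightarrow> \<sigma> y i j mod int n \<noteq> \<sigma> x i j mod int n"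
  shows "aff_dim_ge (mat_hull ((\<lambda>x. latin_matrix d n (\<sigma> x)) ` I)) (real (card I) - 1)"
proof -
  let ?G = "\<lambda>x. latin_matrix d n (\<sigma> x)"
  have own_position: "\<exists>p. ?G x p \<noteq> 0 \<and> (\<forall>y\<in>I. y \<noteq> x \<longrightarrow> ?G y p = 0)"
    if x: "x \<in> I" "x \<noteq> x0" for x
  proof -
    obtain i j where "i < n" "j < n" and ij: "\<forall>y\<in>I. y \<noteq> x \<longrightarrow> \<sigma> y i j mod int n \<noteq> \<sigma> x i j mod int n"
      using own_cell[OF x] by blast
    with latin_matrix_at_cell(2)[OF \<open>3 \<le> d\<close> \<open>i < n\<close> \<open>j < n\<close>, where \<tau> = "\<sigma> x i j"] show ?thesis
      by (intro exI[of _ "i # j # nat (\<sigma> x i j mod int n) # replicate (d - 3) 0"]) auto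
  qed
  note indep = private_positions_aff_indep[OF \<open>finite I\<close> \<open>x0 \<in> I\<close> own_position]
  show ?thesis
    unfolding aff_dim_ge_def
    using subset_mat_hull \<open>finite I\<close> indep by (intro exI[of _ "?G ` I"]) (simp add: card_image)
qed

section \<open>Latin squares with many independent intercalates\<close>

definition triple_swap :: "nat \<Rightarrow> nat \<Rightarrow> nat" where
  "triple_swap T i = (if i < 3 * T then 3 * (i div 3) + (2 - i mod 3) else i)"

lemma triple_swap_block: "q < T \<Longrightarrow> r < 3 \<Longrightarrow> triple_swap T (3 * q + r) = 3 * q + (2 - r)"
  by (simp add: triple_swap_def)

lemma triple_swap_cases:
  obtains (block) q r where "q < T" "r < 3" "i = 3 * q + r" "triple_swap T i = 3 * q + (2 - r)"
  | (outside) "\<not> i < 3 * T" "triple_swap T i = i"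
proof (cases "i < 3 * T")
  case True
  then have "i div 3 < T" "i mod 3 < 3" "i = 3 * (i div 3) + i mod 3" by linarith+ simp
  with block show thesis using triple_swap_block by metis
qed (simp add: triple_swap_def)

lemma triple_swap_triple_swap [simp]: "triple_swap T (triple_swap T i) = i"
proof (cases rule: triple_swap_cases[of T i])
  case (block q r)
  then have "triple_swap T (3 * q + (2 - r)) = 3 * q + (2 - (2 - r))"
    by (intro triple_swap_block) auto
  with block show ?thesis by simp
qed simp

lemma triple_swap_less: "i < n \<Longrightarrow> 3 * T \<le> n \<Longrightarrow> triple_swap T i < n"
  by (cases rule: triple_swap_cases[of T i]) simp_all

lemma even_triple_swap [simp]: "even (triple_swap T i) \<longleftrightarrow> even i"
proof (cases rule: triple_swap_cases[of T i])
  case (block q r)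
  then have "r = 0 \<or> r = 1 \<or> r = 2" by auto
  then show ?thesis using block by auto
qed simp

lemma triple_swap_eq_self: "\<not> i < 3 * T \<Longrightarrow> triple_swap T i = i"
  by (simp add: triple_swap_def)

lemma triple_swap_dist: "\<bar>int (triple_swap T i) - int i\<bar> \<le> 2"
proof (cases rule: triple_swap_cases[of T i])
  case (block q r)
  then have "r = 0 \<or> r = 1 \<or> r = 2" by auto
  then show ?thesis using block by auto
qed simp

text \<open>Exchanging the rows 3t and 3t + 2 of the cyclic square -(i + j) in the odd columns
  creates the intercalates {3t, 3t + 1} \<times> {2h + 1, 2h + 2}, one for each t < T and each h,
  while moving every entry by at most 2.\<close>
definition base_square :: "nat \<Rightarrow> nat \<Rightarrow> nat \<Rightarrow> int" where
  "base_square T i j = - int (if odd j then triple_swap T i else i) - int j"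

definition row_swap_square :: "nat \<Rightarrow> nat \<Rightarrow> nat \<Rightarrow> nat \<Rightarrow> int" where
  "row_swap_square n T i j = base_square T (Transposition.transpose (n - 2) (n - 1) i) j"

definition switched_square :: "nat \<Rightarrow> nat \<Rightarrow> nat \<Rightarrow> nat \<Rightarrow> nat \<Rightarrow> int" where
  "switched_square T t h i j =
     (if i = 3 * t \<or> i = 3 * t + 1 then base_square T i (Transposition.transpose (2 * h + 1) (2 * h + 2) j)
      else base_square T i j)"

lemma latin_square_base_square:
  assumes "even n" "3 * T \<le> n"
  shows "latin_square n (base_square T)"
  unfolding latin_square_def
proof (intro conjI allI impI)
  fix j assume "j < n"
  let ?f = "\<lambda>i. if odd j then triple_swap T i else i"
  have "?f ` {..<n} \<subseteq> {..<n}" using triple_swap_less \<open>3 * T \<le> n\<close> by auto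
  moreover have "inj_on ?f {..<n}" by (rule inj_onI) (metis triple_swap_triple_swap)
  ultimately have "inj_on (\<lambda>i. (- int j - int (?f i)) mod int n) {..<n}"
    by (rule inj_on_mod_comp[OF inj_on_diff_mod])
  then show "inj_on (\<lambda>i. base_square T i j mod int n) {..<n}"
    by (simp add: base_square_def minus_diff_commute)
next
  fix i assume "i < n"
  show "inj_on (\<lambda>j. base_square T i j mod int n) {..<n}"
  proof (rule inj_onI)
    fix x y assume "x \<in> {..<n}" "y \<in> {..<n}" and eq: "base_square T i x mod int n = base_square T i y mod int n"
    define u where "u = (if odd x then triple_swap T i else i)"
    define v where "v = (if odd y then triple_swap T i else i)"
    have entries: "base_square T i x = - int u - int x" "base_square T i y = - int v - int y"
      by (simp_all add: base_square_def u_def v_def)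
    have "int n dvd (int v + int y) - (int u + int x)"
      using eq unfolding entries by (simp add: mod_eq_dvd_iff algebra_simps)
    then have "even ((int v + int y) - (int u + int x))"
      using \<open>even n\<close> by (meson dvd_trans even_of_nat_iff)
    moreover have "even u \<longleftrightarrow> even v" by (simp add: u_def v_def)
    ultimately have "even x \<longleftrightarrow> even y" by (simp; blast)
      \<comment> \<open>n is even and \<open>triple_swap\<close> preserves parity, so congruent entries of a row lie
        in columns of the same parity, where they come from the same row of the cyclic square\<close>
    then have "u = v" by (simp add: u_def v_def)
    then have "(- int u - int x) mod int n = (- int u - int y) mod int n"
      using eq unfolding entries by simp
    then show "x = y"
      using inj_onD[OF inj_on_diff_mod[of "- int u" n]] \<open>x \<in> {..<n}\<close> \<open>y \<in> {..<n}\<close> by simp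
  qed
qed

lemma latin_square_row_swap_square:
  assumes "even n" "3 * T \<le> n" "2 \<le> n"
  shows "latin_square n (row_swap_square n T)"
  unfolding row_swap_square_def
  using latin_square_base_square[OF assms(1,2)] by (rule latin_square_permute_rows)
    (use \<open>2 \<le> n\<close> in auto)

lemma latin_square_switched_square:
  assumes "even n" "3 * T \<le> n" "t < T" "2 * h + 2 < n"
  shows "latin_square n (switched_square T t h)"
proof -
  have swapped: "triple_swap T (3 * t) = 3 * t + 2" "triple_swap T (3 * t + 1) = 3 * t + 1"
    using triple_swap_block[OF \<open>t < T\<close>, of 0] triple_swap_block[OF \<open>t < T\<close>, of 1] by simp_all
  then have intercalate: "base_square T (3 * t) (2 * h + 1) = base_square T (3 * t + 1) (2 * h + 2)"
    "base_square T (3 * t) (2 * h + 2) = base_square T (3 * t + 1) (2 * h + 1)"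
    by (simp_all add: base_square_def)
  show ?thesis
    unfolding switched_square_def[abs_def]
    using latin_square_base_square[OF assms(1,2)] by (rule latin_square_switch_intercalate)
      (use assms intercalate in auto)
qed

lemma base_square_excess:
  "\<bar>base_square T i j + int i + int j\<bar> \<le> 2"
  "\<not> i < 3 * T \<Longrightarrow> base_square T i j + int i + int j = 0"
  using triple_swap_dist[of T i] by (auto simp: base_square_def triple_swap_eq_self)

lemma switched_square_excess:
  "\<bar>switched_square T t h i j + int i + int j\<bar> \<le> 3"
  "i \<noteq> 3 * t \<Longrightarrow> i \<noteq> 3 * t + 1 \<Longrightarrow> switched_square T t h i j = base_square T i j"
proof -
  let ?j = "Transposition.transpose (2 * h + 1) (2 * h + 2) j"
  have "\<bar>int ?j - int j\<bar> \<le> 1" by (cases "j = 2 * h + 1 \<or> j = 2 * h + 2") auto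
  then have "\<bar>base_square T i ?j + int i + int j\<bar> \<le> 3"
    using base_square_excess(1)[of T i ?j] by linarith
  then show "\<bar>switched_square T t h i j + int i + int j\<bar> \<le> 3"
    using base_square_excess(1)[of T i j] by (simp add: switched_square_def)
qed (simp add: switched_square_def)

lemma row_swap_square_excess:
  assumes "3 * T + 2 \<le> n"
  shows "i < 3 * T \<Longrightarrow> row_swap_square n T i j = base_square T i j"
    and "\<not> i < 3 * T \<Longrightarrow> row_swap_square n T i j + int i + int j =
           (if i = n - 2 then -1 else if i = n - 1 then 1 else 0)"
proof -
  show "i < 3 * T \<Longrightarrow> row_swap_square n T i j = base_square T i j"
    using assms by (simp add: row_swap_square_def)
  assume "\<not> i < 3 * T"
  moreover have "\<not> n - 1 < 3 * T" "\<not> n - 2 < 3 * T" using assms by auto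
  ultimately show "row_swap_square n T i j + int i + int j =
      (if i = n - 2 then -1 else if i = n - 1 then 1 else 0)"
    using assms by (auto simp: row_swap_square_def base_square_def triple_swap_eq_self)
qed

text \<open>The row swap is needed only for small n, where T = 0 and there are no switched squares:
  it supplies the second affinely independent vertex.\<close>
datatype square_index = Base | Row_swap | Switch nat nat

text \<open>The bound on T says 2 (hi 0 + ... + hi (n - 1)) = 18 T + 2 < n.\<close>
locale intercalate_family =
  fixes n T :: nat
  assumes even_n: "even n" and four_le_n: "4 \<le> n" and T_small: "18 * T + 2 < n"
begin

fun square :: "square_index \<Rightarrow> nat \<Rightarrow> nat \<Rightarrow> int" where
  "square Base = base_square T"
| "square Row_swap = row_swap_square n T"
| "square (Switch t h) = switched_square T t h"

definition indices :: "square_index set" where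
  "indices = {Base, Row_swap} \<union> (\<lambda>(t, h). Switch t h) ` ({..<T} \<times> {..<n div 2 - 1})"

definition lo :: "nat \<Rightarrow> int" where
  "lo i = (if i < 3 * T then -3 else 0) - (if i = n - 2 then 1 else 0)"

definition hi :: "nat \<Rightarrow> int" where
  "hi i = (if i < 3 * T then 3 else 0) + (if i = n - 1 then 1 else 0)"

lemma rows_below_last_two: "3 * T + 2 \<le> n"
  using T_small by linarith

lemma Switch_in_indices: "Switch t h \<in> indices \<longleftrightarrow> t < T \<and> 2 * h + 2 < n"
  using even_n four_le_n by (auto simp: indices_def elim!: evenE)

lemma latin_square_square: "x \<in> indices \<Longrightarrow> latin_square n (square x)"
  using rows_below_last_two even_n four_le_n
  by (cases x) (auto simp: Switch_in_indices indices_def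
      intro: latin_square_base_square latin_square_row_swap_square latin_square_switched_square)

lemma square_band:
  assumes "x \<in> indices" "i < n"
  shows "lo i \<le> square x i j + int i + int j \<and> square x i j + int i + int j \<le> hi i"
proof (cases "i < 3 * T")
  case True
  have "lo i = -3" "hi i = 3" using True rows_below_last_two by (auto simp: lo_def hi_def)
  moreover have "\<bar>square x i j + int i + int j\<bar> \<le> 3"
    using base_square_excess(1)[of T i j] switched_square_excess(1)
      row_swap_square_excess(1)[OF rows_below_last_two True]
    by (cases x) fastforce+
  ultimately show ?thesis by linarith
next
  case False
  have "lo i = - (if i = n - 2 then 1 else 0)" "hi i = (if i = n - 1 then 1 else 0)"
    using False by (simp_all add: lo_def hi_def)
  moreover have "square (Switch t h) i j = base_square T i j" if "t < T" for t h
    using False that by (auto intro: switched_square_excess(2))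
  ultimately show ?thesis
    using assms base_square_excess(2)[OF False, of j]
      row_swap_square_excess(2)[OF rows_below_last_two False, of j]
      four_le_n
    by (cases x) (auto simp: Switch_in_indices indices_def)
qed

lemma sum_hi: "2 * (\<Sum>i<n. hi i) < int n"
proof -
  have "(\<Sum>i<n. hi i) = 3 * int (3 * T) + 1"
    using rows_below_last_two four_le_n by (simp add: hi_def sum.distrib sum_if_less)
  then show ?thesis using T_small by linarith
qed

lemma sum_lo: "- int n < 2 * (\<Sum>i<n. lo i)"
proof -
  have "(\<Sum>i<n. lo i) = - 3 * int (3 * T) - 1"
    using rows_below_last_two four_le_n by (simp add: lo_def sum_subtractf sum_if_less)
  then show ?thesis using T_small by linarith
qed

lemma card_indices: "card indices = T * (n div 2 - 1) + 2"
proof -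
  have "inj_on (\<lambda>(t, h). Switch t h) ({..<T} \<times> {..<n div 2 - 1})"
    by (auto intro: inj_onI)
  then have "card ((\<lambda>(t, h). Switch t h) ` ({..<T} \<times> {..<n div 2 - 1})) = T * (n div 2 - 1)"
    by (simp add: card_image card_cartesian_product)
  then show ?thesis by (auto simp: indices_def card_insert_if)
qed

lemma square_row_before_last:
  assumes "y \<in> indices" "y \<noteq> Row_swap"
  shows "square y (n - 2) j = base_square T (n - 2) j"
  using assms rows_below_last_two
  by (cases y) (auto simp: Switch_in_indices indices_def intro!: switched_square_excess(2))

lemma square_switch_cell:
  assumes "y \<in> indices" "y \<noteq> Switch t h" "t < T"
  shows "square y (3 * t) (2 * h + 1) = base_square T (3 * t) (2 * h + 1)"
proof (cases y)
  case Row_swap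
  then show ?thesis using row_swap_square_excess(1)[OF rows_below_last_two] \<open>t < T\<close> by simp
next
  case (Switch t' h')
  show ?thesis
  proof (cases "t' = t")
    case True
    then have "h' \<noteq> h" using Switch assms by simp
    then have "Transposition.transpose (2 * h' + 1) (2 * h' + 2) (2 * h + 1) = 2 * h + 1"
      by (simp add: transpose_apply_other)
    then show ?thesis using Switch True by (simp add: switched_square_def)
  next
    case False
    then show ?thesis using Switch by (auto intro: switched_square_excess(2))
  qed
qed simp

lemma square_own_cell:
  assumes "x \<in> indices" "x \<noteq> Base"
  shows "\<exists>i<n. \<exists>j<n. \<forall>y\<in>indices. y \<noteq> x \<longrightarrow> square y i j mod int n \<noteq> square x i j mod int n"
proof (cases x)
  case Row_swap
  have "square y (n - 2) 0 = square x (n - 2) 0 + 1" if "y \<in> indices" "y \<noteq> x" for y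
    using square_row_before_last[of y 0] that Row_swap four_le_n
    by (simp add: row_swap_square_def base_square_def)
  then have "\<forall>y\<in>indices. y \<noteq> x \<longrightarrow> square y (n - 2) 0 mod int n \<noteq> square x (n - 2) 0 mod int n"
    using four_le_n mod_succ_neq[of "int n"] by auto
  moreover have "n - 2 < n" "0 < n" using four_le_n by auto
  ultimately show ?thesis by blast
next
  case (Switch t h)
  then have "t < T" "2 * h + 2 < n" using assms Switch_in_indices by auto
  have "square y (3 * t) (2 * h + 1) = square x (3 * t) (2 * h + 1) - 1" if "y \<in> indices" "y \<noteq> x" for y
    using square_switch_cell[OF that[unfolded Switch] \<open>t < T\<close>] Switch triple_swap_block[OF \<open>t < T\<close>, of 0]
    by (simp add: switched_square_def base_square_def)
  moreover have "(square x (3 * t) (2 * h + 1) - 1) mod int n \<noteq> square x (3 * t) (2 * h + 1) mod int n"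
    using four_le_n mod_succ_neq[of "int n" "square x (3 * t) (2 * h + 1) - 1"] by simp
  ultimately have "\<forall>y\<in>indices. y \<noteq> x \<longrightarrow>
      square y (3 * t) (2 * h + 1) mod int n \<noteq> square x (3 * t) (2 * h + 1) mod int n"
    by simp
  moreover have "3 * t < n" "2 * h + 1 < n" using \<open>t < T\<close> \<open>2 * h + 2 < n\<close> rows_below_last_two by linarith+
  ultimately show ?thesis by blast
qed (use assms in simp)

end

lemma powr_three_halves_le_family_size:
  assumes "even n" "4 \<le> n"
  shows "real n powr (3 / 2) / 1000 \<le> real (((n - 3) div 18) * (n div 2 - 1) + 1)"
proof -
  define T m where "T = (n - 3) div 18" and "m = n div 2 - 1"
  have "real n powr (3 / 2) \<le> real n powr 2" using assms by (intro powr_mono) auto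
  also have "\<dots> = real n * real n" using assms by (simp add: powr_realpow power2_eq_square)
  also have "\<dots> \<le> 1000 * (real T * real m + 1)"
  proof (cases "n < 32")
    case True
    then have "real n * real n \<le> 31 * 31" by (intro mult_mono) auto
    then show ?thesis by (simp add: add_increasing)
  next
    case False
    have "real n - 20 \<le> 18 * real T" unfolding T_def by linarith
    moreover have "real n - 2 = 2 * real m" unfolding m_def using assms by (auto elim!: evenE)
    ultimately have "(real n - 20) * (real n - 2) \<le> (18 * real T) * (2 * real m)"
      using False by (intro mult_mono) auto
    moreover have "594 * real n \<le> 26 * (real n * real n)" using False by simp
    ultimately show ?thesis by (simp add: algebra_simps)
  qed
  finally show ?thesis unfolding T_def m_def by simp
qed

theorem corollary2p7:
  shows "\<exists>c::real. c > 0 \<and> (\<forall>n d :: nat. even n \<and> n > 2 \<and> odd d \<and> d > 1 \<longrightarrow>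
     (\<exists>V. V \<subseteq> vertices d n \<and> mat_hull V \<subseteq> Zer1 d n
          \<and> aff_dim_ge (mat_hull V) (c * real n powr (3/2))))"
proof (intro exI[of _ "1 / 1000"] conjI allI impI)
  fix n d :: nat
  assume "even n \<and> n > 2 \<and> odd d \<and> d > 1"
  then have "even n" "4 \<le> n" "odd d" "3 \<le> d" by (auto elim!: evenE oddE)
  define T where "T = (n - 3) div 18"
  have "18 * T + 2 < n" unfolding T_def using \<open>4 \<le> n\<close> by linarith
  with \<open>even n\<close> \<open>4 \<le> n\<close> interpret intercalate_family n T by unfold_locales
  define V where "V = (\<lambda>x. latin_matrix d n (square x)) ` indices"
  have "V \<subseteq> vertices d n"
    unfolding V_def using latin_matrix_in_vertices[OF latin_square_square] \<open>3 \<le> d\<close> by auto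
  moreover have "mat_hull (latin_matrix d n ` square ` indices) \<subseteq> Zer1 d n"
    using \<open>odd d\<close> \<open>3 \<le> d\<close> \<open>even n\<close> sum_hi sum_lo
    by (rule mat_hull_latin_matrices_subset_Zer1) (auto intro: latin_square_square simp: square_band)
  then have "mat_hull V \<subseteq> Zer1 d n" by (simp add: V_def image_image)
  moreover have "aff_dim_ge (mat_hull V) (real (card indices) - 1)"
    unfolding V_def by (rule aff_dim_ge_latin_matrices[OF _ _ \<open>3 \<le> d\<close> square_own_cell])
      (simp_all add: indices_def)
  moreover have "1 / 1000 * real n powr (3 / 2) \<le> real (card indices) - 1"
    unfolding card_indices unfolding T_def
    using powr_three_halves_le_family_size[OF \<open>even n\<close> \<open>4 \<le> n\<close>] by simp
  ultimately show "\<exists>V. V \<subseteq> vertices d n \<and> mat_hull V \<subseteq> Zer1 d n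
      \<and> aff_dim_ge (mat_hull V) (1 / 1000 * real n powr (3 / 2))"
    by (blast intro: aff_dim_ge_mono)
qed simp

end
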